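(* Let $K$ be a connected CW complex, $f:K\to K$ a pointed cellular map with $f\circ f\simeq f$, and $H:K\times I\to K$ a (not necessarily pointed) homotopy from $f$ to $f^2$. Let $d:K\to\mathrm{Tel}(f)$ and $u:\mathrm{Tel}(f)\to K$ be the maps described in the context. Then $g=d\circ u:\mathrm{Tel}(f)\to\mathrm{Tel}(f)$ satisfies $g\circ g\simeq g$, and if $g$ splits then $f$ splits.
   Context: $\mathrm{Tel}(f)$ is the union over $n\in\mathbb{Z}$ of the unreduced mapping cylinders $M_n$ of $f:K_n\to K_{n+1}$, each $K_n$ a copy of $K$, glued along the $K_{n+1}$. The map $d:K\to\mathrm{Tel}(f)$ is $f$ regarded as a map into the copy $K_0$; $u:\mathrm{Tel}(f)\to K$ equals $f$ on each copy $K_n$ and equals $H(x,t)$ at the point $(x,t)$ of $M_n$. A map $h:X\to X$ splits if there are a space $L$ and maps $d':X\to L$, $u':L\to X$ with $d'\circ u'\simeq\mathrm{id}_L$ and $u'\circ d'\simeq h$. Homotopies are free. *)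

theory Defs
  imports "HOL-Analysis.Analysis"
begin

definition quotient_topology :: "'a topology \<Rightarrow> ('a \<Rightarrow> 'b) \<Rightarrow> 'b topology" where
  "quotient_topology X q =
     topology (\<lambda>U. U \<subseteq> q ` topspace X \<and> openin X {x \<in> topspace X. q x \<in> U})"

lemma istopology_quotient:
  "istopology (\<lambda>U. U \<subseteq> q ` topspace X \<and> openin X {x \<in> topspace X. q x \<in> U})"
proof -
  have 1: "openin X {x \<in> topspace X. q x \<in> S \<inter> T}"
    if "openin X {x \<in> topspace X. q x \<in> S}" "openin X {x \<in> topspace X. q x \<in> T}" for S T
  proof -
    have "{x \<in> topspace X. q x \<in> S \<inter> T} =
          {x \<in> topspace X. q x \<in> S} \<inter> {x \<in> topspace X. q x \<in> T}" by blast
    then show ?thesis using that by auto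
  qed
  have 2: "openin X {x \<in> topspace X. q x \<in> \<Union>\<K>}"
    if "\<forall>K\<in>\<K>. openin X {x \<in> topspace X. q x \<in> K}" for \<K>
  proof -
    have "{x \<in> topspace X. q x \<in> \<Union>\<K>} = (\<Union>K\<in>\<K>. {x \<in> topspace X. q x \<in> K})" by blast
    then show ?thesis using that by auto
  qed
  show ?thesis unfolding istopology_def using 1 2 by blast
qed

definition disc_pts :: "nat \<Rightarrow> (nat \<Rightarrow> real) set" where
  "disc_pts n = {x. (\<forall>i\<ge>n. x i = 0) \<and> (\<Sum>i<n. (x i)^2) \<le> 1}"

definition open_disc_pts :: "nat \<Rightarrow> (nat \<Rightarrow> real) set" where
  "open_disc_pts n = {x. (\<forall>i\<ge>n. x i = 0) \<and> (\<Sum>i<n. (x i)^2) < 1}"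

definition sphere_pts :: "nat \<Rightarrow> (nat \<Rightarrow> real) set" where
  "sphere_pts n = {x. (\<forall>i\<ge>n. x i = 0) \<and> (\<Sum>i<n. (x i)^2) = 1}"

text \<open>A CW structure on a space X (classical definition of J.H.C. Whitehead):
  C is the set of (open) cells, cdim gives the dimension of each cell and \<Phi> its
  characteristic map.\<close>

definition cw_structure ::
  "'a topology \<Rightarrow> 'a set set \<Rightarrow> ('a set \<Rightarrow> nat) \<Rightarrow> ('a set \<Rightarrow> (nat \<Rightarrow> real) \<Rightarrow> 'a) \<Rightarrow> bool" where
  "cw_structure X C cdim \<Phi> \<longleftrightarrow>
     Hausdorff_space X \<and>
     {} \<notin> C \<and> pairwise disjnt C \<and> \<Union>C = topspace X \<and>
     (\<forall>c\<in>C.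
        continuous_map (subtopology (Euclidean_space (cdim c)) (disc_pts (cdim c))) X (\<Phi> c) \<and>
        homeomorphic_map (subtopology (Euclidean_space (cdim c)) (open_disc_pts (cdim c)))
                         (subtopology X c) (\<Phi> c) \<and>
        \<Phi> c ` sphere_pts (cdim c) \<subseteq> \<Union>{c'\<in>C. cdim c' < cdim c}) \<and>
     (\<forall>c\<in>C. finite {c'\<in>C. c' \<inter> X closure_of c \<noteq> {}}) \<and>
     (\<forall>A. A \<subseteq> topspace X \<longrightarrow> (\<forall>c\<in>C. closedin X (A \<inter> X closure_of c)) \<longrightarrow> closedin X A)"

definition skeleton :: "'a set set \<Rightarrow> ('a set \<Rightarrow> nat) \<Rightarrow> nat \<Rightarrow> 'a set" where
  "skeleton C cdim n = \<Union>{c\<in>C. cdim c \<le> n}"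

definition cellular_map :: "'a set set \<Rightarrow> ('a set \<Rightarrow> nat) \<Rightarrow> ('a \<Rightarrow> 'a) \<Rightarrow> bool" where
  "cellular_map C cdim f \<longleftrightarrow> (\<forall>n. f ` skeleton C cdim n \<subseteq> skeleton C cdim n)"

definition splits_through :: "'b topology \<Rightarrow> 'a topology \<Rightarrow> ('a \<Rightarrow> 'a) \<Rightarrow> bool" where
  "splits_through L X h \<longleftrightarrow>
     (\<exists>d' u'. continuous_map X L d' \<and> continuous_map L X u' \<and>
              homotopic_with (\<lambda>_. True) L L (d' \<circ> u') id \<and>
              homotopic_with (\<lambda>_. True) X X (u' \<circ> d') h)"

text \<open>Points of Tel(f) are represented by triples (n, x, t) with n an integer (the index of
  the cylinder M_n), x a point of K (= K_n) and t in [0,1).  The space is the quotient of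
  the disjoint union over n of the cylinders K_n \<times> [0,1] under the identification
  (n, x, 1) \<sim> (n+1, f x, 0), i.e. the union of the unreduced mapping cylinders M_n of
  f : K_n \<rightarrow> K_(n+1) glued along K_(n+1); the point (n, x, 0) is x in the copy K_n.\<close>

definition tel_quot :: "('a \<Rightarrow> 'a) \<Rightarrow> int \<times> 'a \<times> real \<Rightarrow> int \<times> 'a \<times> real" where
  "tel_quot f = (\<lambda>(n, x, t). if t = 1 then (n + 1, f x, 0) else (n, x, t))"

definition tel_cylinders :: "'a topology \<Rightarrow> (int \<times> 'a \<times> real) topology" where
  "tel_cylinders K = prod_topology (discrete_topology UNIV) (prod_topology K (top_of_set {0..1}))"

definition Tel :: "'a topology \<Rightarrow> ('a \<Rightarrow> 'a) \<Rightarrow> (int \<times> 'a \<times> real) topology" where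
  "Tel K f = quotient_topology (tel_cylinders K) (tel_quot f)"

definition tel_d :: "('a \<Rightarrow> 'a) \<Rightarrow> 'a \<Rightarrow> int \<times> 'a \<times> real" where
  "tel_d f x = (0, f x, 0)"

text \<open>u : Tel(f) \<rightarrow> K is H(x,t) at the point (x,t) of M_n (and hence f on each K_n).\<close>
definition tel_u :: "('a \<times> real \<Rightarrow> 'a) \<Rightarrow> int \<times> 'a \<times> real \<Rightarrow> 'a" where
  "tel_u H = (\<lambda>(n, x, t). H (x, t))"

end

theory Submission
  imports Defs
begin

text \<open>Everything follows formally from two homotopies: \<open>u \<circ> d \<simeq> f\<close>, as \<open>H(-,0) = f\<close>,
  and \<open>d \<circ> f \<simeq> d\<close>, as \<open>d\<close> is \<open>f\<close> followed by the inclusion of \<open>K\<^sub>0\<close> and \<open>f \<circ> f \<simeq> f\<close>.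
  Then \<open>g \<circ> g = d \<circ> (u \<circ> d) \<circ> u \<simeq> d \<circ> f \<circ> u \<simeq> g\<close>, and a splitting \<open>g \<simeq> u' \<circ> d'\<close>,
  \<open>d' \<circ> u' \<simeq> id\<close> yields the splitting \<open>d' \<circ> d\<close>, \<open>u \<circ> u'\<close> of \<open>f\<close> through the same space.\<close>

lemmas [trans] = homotopic_with_trans

lemma homotopic_idempotent_compose:
  assumes d: "continuous_map K T d" and u: "continuous_map T K u"
    and ud: "homotopic_with (\<lambda>_. True) K K (u \<circ> d) f"
    and df: "homotopic_with (\<lambda>_. True) K T (d \<circ> f) d"
  shows "homotopic_with (\<lambda>_. True) T T ((d \<circ> u) \<circ> (d \<circ> u)) (d \<circ> u)"
proof -
  have "homotopic_with (\<lambda>_. True) T T (d \<circ> (u \<circ> d) \<circ> u) (d \<circ> f \<circ> u)"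
    using ud d u by (intro homotopic_compose) simp_all
  also have "homotopic_with (\<lambda>_. True) T T (d \<circ> f \<circ> u) (d \<circ> u)"
    using df u by (intro homotopic_compose) simp_all
  finally show ?thesis
    by (simp only: o_assoc)
qed

lemma splits_through_of_split_compose:
  assumes d: "continuous_map K T d" and u: "continuous_map T K u"
    and ud: "homotopic_with (\<lambda>_. True) K K (u \<circ> d) f"
    and ff: "homotopic_with (\<lambda>_. True) K K (f \<circ> f) f"
    and split: "splits_through L T (d \<circ> u)"
  shows "splits_through L K f"
proof -
  obtain d' u' where d': "continuous_map T L d'" and u': "continuous_map L T u'"
    and du': "homotopic_with (\<lambda>_. True) L L (d' \<circ> u') id"
    and ud': "homotopic_with (\<lambda>_. True) T T (u' \<circ> d') (d \<circ> u)"
    using split unfolding splits_through_def by blast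
  have "homotopic_with (\<lambda>_. True) L L (d' \<circ> (d \<circ> u) \<circ> u') (d' \<circ> (u' \<circ> d') \<circ> u')"
    using homotopic_with_symD [OF ud'] d' u' by (intro homotopic_compose) simp_all
  also have "d' \<circ> (u' \<circ> d') \<circ> u' = (d' \<circ> u') \<circ> (d' \<circ> u')"
    by (simp add: o_assoc)
  also have "homotopic_with (\<lambda>_. True) L L \<dots> (id \<circ> id)"
    using du' by (intro homotopic_compose)
  also have "id \<circ> id = id"
    by simp
  finally have split_id: "homotopic_with (\<lambda>_. True) L L ((d' \<circ> d) \<circ> (u \<circ> u')) id"
    by (simp only: o_assoc)
  have "homotopic_with (\<lambda>_. True) K K (u \<circ> (u' \<circ> d') \<circ> d) (u \<circ> (d \<circ> u) \<circ> d)"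
    using ud' u d by (intro homotopic_compose) simp_all
  also have "u \<circ> (d \<circ> u) \<circ> d = (u \<circ> d) \<circ> (u \<circ> d)"
    by (simp add: o_assoc)
  also have "homotopic_with (\<lambda>_. True) K K \<dots> (f \<circ> f)"
    using ud by (intro homotopic_compose)
  also note ff
  finally have split_f: "homotopic_with (\<lambda>_. True) K K ((u \<circ> u') \<circ> (d' \<circ> d)) f"
    by (simp only: o_assoc)
  show ?thesis
    unfolding splits_through_def
    using continuous_map_compose [OF d d'] continuous_map_compose [OF u' u] split_id split_f
    by blast
qed

lemma openin_quotient_topology:
  "openin (quotient_topology X q) U \<longleftrightarrow> U \<subseteq> q ` topspace X \<and> openin X {x \<in> topspace X. q x \<in> U}"
  unfolding quotient_topology_def by (simp only: topology_inverse' [OF istopology_quotient])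

lemma topspace_quotient_topology: "topspace (quotient_topology X q) = q ` topspace X"
proof -
  have "{x \<in> topspace X. q x \<in> q ` topspace X} = topspace X"
    by auto
  then have "openin (quotient_topology X q) (q ` topspace X)"
    by (simp add: openin_quotient_topology)
  then show ?thesis
    by (metis openin_quotient_topology openin_subset openin_topspace subset_antisym)
qed

lemma continuous_map_quotient_topology: "continuous_map X (quotient_topology X q) q"
  unfolding continuous_map_def topspace_quotient_topology
  by (auto simp: openin_quotient_topology)

lemma continuous_map_from_quotient_topology:
  assumes "continuous_map X Y (g \<circ> q)"
  shows "continuous_map (quotient_topology X q) Y g"
proof -
  have "{x \<in> topspace X. q x \<in> {y \<in> q ` topspace X. g y \<in> V}} = {x \<in> topspace X. (g \<circ> q) x \<in> V}"
    for V
    by auto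
  then show ?thesis
    using assms unfolding continuous_map_def topspace_quotient_topology
    by (auto simp: openin_quotient_topology)
qed

lemma continuous_map_tel_level: "continuous_map K (Tel K f) (\<lambda>x. (n, x, 0))"
proof -
  have "continuous_map K (tel_cylinders K) (\<lambda>x. (n, x, 0))"
    unfolding tel_cylinders_def
    by (intro continuous_map_pairedI continuous_map_id [unfolded id_def]) simp_all
  then have "continuous_map K (Tel K f) (tel_quot f \<circ> (\<lambda>x. (n, x, 0)))"
    unfolding Tel_def using continuous_map_quotient_topology by (rule continuous_map_compose)
  then show ?thesis
    by (simp add: o_def tel_quot_def)
qed

lemma tel_d_eq_level_compose: "tel_d f = (\<lambda>x. (0, x, 0)) \<circ> f"
  by (simp add: fun_eq_iff tel_d_def)

lemma continuous_map_tel_d: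
  assumes "continuous_map K K f"
  shows "continuous_map K (Tel K f) (tel_d f)"
  unfolding tel_d_eq_level_compose using assms continuous_map_tel_level
  by (rule continuous_map_compose)

lemma continuous_map_tel_u:
  assumes f: "continuous_map K K f"
    and H: "continuous_map (prod_topology K (top_of_set {0..1})) K H"
    and H0: "\<And>x. x \<in> topspace K \<Longrightarrow> H (x, 0) = f x"
    and H1: "\<And>x. x \<in> topspace K \<Longrightarrow> H (x, 1) = f (f x)"
  shows "continuous_map (Tel K f) K (tel_u H)"
  unfolding Tel_def
proof (rule continuous_map_from_quotient_topology)
  have "continuous_map (tel_cylinders K) K (H \<circ> snd)"
    unfolding tel_cylinders_def using continuous_map_snd H by (rule continuous_map_compose)
  moreover have "(H \<circ> snd) p = (tel_u H \<circ> tel_quot f) p"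
    if "p \<in> topspace (tel_cylinders K)" for p
  proof -
    obtain n x t where p: "p = (n, x, t)"
      by (cases p) auto
    have "x \<in> topspace K"
      using that by (simp add: p tel_cylinders_def)
    then show ?thesis
      using continuous_map_image_subset_topspace [OF f]
      by (auto simp: p tel_u_def tel_quot_def H0 H1)
  qed
  ultimately show "continuous_map (tel_cylinders K) K (tel_u H \<circ> tel_quot f)"
    by (rule continuous_map_eq)
qed

lemma homotopic_tel_u_tel_d:
  assumes f: "continuous_map K K f"
    and ff: "homotopic_with (\<lambda>_. True) K K (f \<circ> f) f"
    and u: "continuous_map (Tel K f) K (tel_u H)"
    and H0: "\<And>x. x \<in> topspace K \<Longrightarrow> H (x, 0) = f x"
  shows "homotopic_with (\<lambda>_. True) K K (tel_u H \<circ> tel_d f) f"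
proof -
  have "homotopic_with (\<lambda>_. True) K K (tel_u H \<circ> tel_d f) (f \<circ> f)"
    using continuous_map_compose [OF continuous_map_tel_d [OF f] u]
      continuous_map_image_subset_topspace [OF f]
    by (intro homotopic_with_equal) (auto simp: tel_u_def tel_d_def H0)
  then show ?thesis
    using ff by (rule homotopic_with_trans)
qed

lemma homotopic_tel_d_compose:
  assumes "homotopic_with (\<lambda>_. True) K K (f \<circ> f) f"
  shows "homotopic_with (\<lambda>_. True) K (Tel K f) (tel_d f \<circ> f) (tel_d f)"
  unfolding tel_d_eq_level_compose o_assoc [symmetric]
  using assms continuous_map_tel_level
  by (rule homotopic_with_compose_continuous_map_left) auto

theorem lemma2p5:
  fixes K :: "'a topology" and C :: "'a set set" and cdim :: "'a set \<Rightarrow> nat"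
    and \<Phi> :: "'a set \<Rightarrow> (nat \<Rightarrow> real) \<Rightarrow> 'a"
    and f :: "'a \<Rightarrow> 'a" and k0 :: 'a and H :: "'a \<times> real \<Rightarrow> 'a"
  assumes cw: "cw_structure K C cdim \<Phi>"
    and conn: "connected_space K"
    and base: "{k0} \<in> C" "cdim {k0} = 0"
    and fcont: "continuous_map K K f"
    and fpointed: "f k0 = k0"
    and fcell: "cellular_map C cdim f"
    and fidem: "homotopic_with (\<lambda>_. True) K K (f \<circ> f) f"
    and Hcont: "continuous_map (prod_topology K (top_of_set {0..1})) K H"
    and H0: "\<And>x. x \<in> topspace K \<Longrightarrow> H (x, 0) = f x"
    and H1: "\<And>x. x \<in> topspace K \<Longrightarrow> H (x, 1) = f (f x)"
  shows "homotopic_with (\<lambda>_. True) (Tel K f) (Tel K f)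
           ((tel_d f \<circ> tel_u H) \<circ> (tel_d f \<circ> tel_u H)) (tel_d f \<circ> tel_u H)
         \<and> ((\<exists>L :: 'b topology. splits_through L (Tel K f) (tel_d f \<circ> tel_u H))
              \<longrightarrow> (\<exists>L :: 'b topology. splits_through L K f))"
proof -
  have d: "continuous_map K (Tel K f) (tel_d f)"
    using fcont by (rule continuous_map_tel_d)
  have u: "continuous_map (Tel K f) K (tel_u H)"
    using fcont Hcont H0 H1 by (rule continuous_map_tel_u)
  have ud: "homotopic_with (\<lambda>_. True) K K (tel_u H \<circ> tel_d f) f"
    using fcont fidem u H0 by (rule homotopic_tel_u_tel_d)
  have df: "homotopic_with (\<lambda>_. True) K (Tel K f) (tel_d f \<circ> f) (tel_d f)"
    using fidem by (rule homotopic_tel_d_compose)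
  show ?thesis
    using homotopic_idempotent_compose [OF d u ud df]
      splits_through_of_split_compose [OF d u ud fidem]
    by blast
qed

end
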